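(* The associated circled array of any (non-skew) semistandard Young tableau consists only of empty rows.
   Context: For a skew semistandard tableau $S$ (rows weakly increasing, columns strictly increasing), let $F_{i,j}$ be the number of boxes in rows $1,\dots,i$ of $S$ with entry $\le j$, where the empty boxes of the inner shape are counted as boxes with entry $0$; set $W_{i,j}=F_{i,j}+F_{i,j+1}-F_{i-1,j}-F_{i+1,j+1}$ for $i\ge1$, $j\ge0$ (equivalently, the number of entries $\le j$ in row $i$ minus the number of entries $\le j+1$ in row $i+1$). Let $w_j$ be the one-rowed array consisting of $W_{1,j}$ copies of $1$, $W_{2,j}$ copies of $2$, $\dots$. The associated circled array of $S$ is $w_N\leftharpoonup w_{N-1}\leftharpoonup\cdots\leftharpoonup w_0$ for $N$ sufficiently large (empty rows at the bottom are disregarded). A circled array is a finite list of rows, each a finite weakly increasing sequence of positive integers regarded as circled numbers (empty rows allowed). A one-rowed array is a finite weakly increasing sequence of positive integers (boxed numbers). The action $C\leftharpoonup x$ of a one-rowed array $x$ on a circled array $C$ with rows $C_1,\dots,C_r$: put $x^{(1)}=x$; for $p=1,\dots,r$, list the circled entries of $C_p$ and the boxed entries of $x^{(p)}$ as cells in the order: circled $1$'s, boxed $1$'s, circled $2$'s, boxed $2$'s, $\dots$. Regard circled cells as containing a ball and boxed cells as empty, and perform one step of the Takahashi–Satsuma box-ball system: balls are moved one at a time from left to right, each to the nearest cell to its right that was originally empty and is not yet occupied by a moved ball; a ball with no such cell is discarded. Then each cell originally containing a ball becomes a boxed cell with its number decreased by one, each originally empty cell receiving a ball becomes a circled cell with the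 same number, other cells are unchanged, and boxed $0$'s are deleted. The circled numbers form the new row $p$ and the boxed numbers form $x^{(p+1)}$. Finally $x^{(r+1)}$ is appended as a new last row (circled). $x_1\leftharpoonup x_2\leftharpoonup\cdots\leftharpoonup x_n$ denotes the result of acting successively with $x_1,x_2,\dots,x_n$ on the array with no rows. *)

theory Defs
  imports Main
begin

text \<open>A skew tableau is given by its inner shape mu (list of row lengths, padded
  with zeros) and its rows T (0-based list; T ! i is the list of entries of row i+1,
  read left to right, occupying columns mu_i, ..., mu_i + length (T ! i) - 1, 0-based).\<close>

definition mu_at :: "nat list \<Rightarrow> nat \<Rightarrow> nat" where
  "mu_at mu i = (if i < length mu then mu ! i else 0)"

definition lam_at :: "nat list \<Rightarrow> nat list list \<Rightarrow> nat \<Rightarrow> nat" where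
  "lam_at mu T i = (if i < length T then mu_at mu i + length (T ! i) else 0)"

definition skew_ssyt :: "nat list \<Rightarrow> nat list list \<Rightarrow> bool" where
  "skew_ssyt mu T \<longleftrightarrow>
     length mu \<le> length T \<and>
     (\<forall>i. mu_at mu (Suc i) \<le> mu_at mu i) \<and>
     (\<forall>i. lam_at mu T (Suc i) \<le> lam_at mu T i) \<and>
     (\<forall>r \<in> set T. sorted r \<and> (\<forall>x \<in> set r. 0 < x)) \<and>
     (\<forall>i c. Suc i < length T \<longrightarrow>
        mu_at mu i \<le> c \<longrightarrow> c < lam_at mu T i \<longrightarrow>
        mu_at mu (Suc i) \<le> c \<longrightarrow> c < lam_at mu T (Suc i) \<longrightarrow>
        T ! i ! (c - mu_at mu i) < T ! Suc i ! (c - mu_at mu (Suc i)))"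

definition ssyt :: "nat list list \<Rightarrow> bool" where
  "ssyt T \<longleftrightarrow> skew_ssyt [] T"

text \<open>Number of boxes in row i (1-based) with entry \<le> j, inner boxes counted as entry 0.\<close>
definition row_cnt :: "nat list \<Rightarrow> nat list list \<Rightarrow> nat \<Rightarrow> nat \<Rightarrow> nat" where
  "row_cnt mu T i j = (if 1 \<le> i \<and> i \<le> length T
      then mu_at mu (i - 1) + length (filter (\<lambda>x. x \<le> j) (T ! (i - 1))) else 0)"

definition F :: "nat list \<Rightarrow> nat list list \<Rightarrow> nat \<Rightarrow> nat \<Rightarrow> int" where
  "F mu T i j = int (\<Sum>k\<in>{1..i}. row_cnt mu T k j)"

definition W :: "nat list \<Rightarrow> nat list list \<Rightarrow> nat \<Rightarrow> nat \<Rightarrow> int" where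
  "W mu T i j = F mu T i j + F mu T i (Suc j) - F mu T (i - 1) j - F mu T (Suc i) (Suc j)"

text \<open>One-rowed array w_j: W_{1,j} copies of 1, W_{2,j} copies of 2, ...
  (W_{i,j} = 0 for i > number of rows, so the range 1..length T suffices).\<close>
definition w_arr :: "nat list \<Rightarrow> nat list list \<Rightarrow> nat \<Rightarrow> nat list" where
  "w_arr mu T j = concat (map (\<lambda>i. replicate (nat (W mu T i j)) i) [1..<Suc (length T)])"

text \<open>Cells: (number, has_ball). Circled = ball, boxed = empty.
  Order: circled 1's, boxed 1's, circled 2's, boxed 2's, ...\<close>
definition cells_of :: "nat list \<Rightarrow> nat list \<Rightarrow> (nat \<times> bool) list" where
  "cells_of C x = sort_key (\<lambda>(k, b). 2 * k + (if b then 0::nat else 1))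
                    (map (\<lambda>k. (k, True)) C @ map (\<lambda>k. (k, False)) x)"

text \<open>Move balls one at a time from left to right: a ball at position p goes to the
  nearest cell to its right that was originally empty and not yet occupied by a moved
  ball (if any; otherwise it is discarded).\<close>
fun bb_fill :: "bool list \<Rightarrow> nat list \<Rightarrow> nat set \<Rightarrow> nat set" where
  "bb_fill cs [] S = S"
| "bb_fill cs (p # ps) S =
     bb_fill cs ps
       (if \<exists>q. p < q \<and> q < length cs \<and> \<not> cs ! q \<and> q \<notin> S
        then insert (LEAST q. p < q \<and> q < length cs \<and> \<not> cs ! q \<and> q \<notin> S) S
        else S)"

definition bb_step :: "(nat \<times> bool) list \<Rightarrow> nat set" where
  "bb_step cells = bb_fill (map snd cells) (filter (\<lambda>p. snd (cells ! p)) [0..<length cells]) {}"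

definition bb_new :: "(nat \<times> bool) list \<Rightarrow> (nat \<times> bool) list" where
  "bb_new cells = (let S = bb_step cells in
     filter (\<lambda>(k, b). b \<or> k \<noteq> 0)
       (map (\<lambda>q. (case cells ! q of (k, b) \<Rightarrow>
               if b then (k - 1, False) else if q \<in> S then (k, True) else (k, False)))
            [0..<length cells]))"

text \<open>Processing one row: returns (new circled row, new boxed array).\<close>
definition row_act :: "nat list \<Rightarrow> nat list \<Rightarrow> nat list \<times> nat list" where
  "row_act C x = (let ns = bb_new (cells_of C x) in
      (sort (map fst (filter snd ns)), sort (map fst (filter (\<lambda>c. \<not> snd c) ns))))"

fun act_rows :: "nat list list \<Rightarrow> nat list \<Rightarrow> nat list list" where
  "act_rows [] x = [x]"
| "act_rows (C # Cs) x = (case row_act C x of (C', x') \<Rightarrow> C' # act_rows Cs x')"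

definition act :: "nat list list \<Rightarrow> nat list \<Rightarrow> nat list list" where
  "act C x = act_rows C x"

text \<open>x_1 \<leftharpoonup> x_2 \<leftharpoonup> ... \<leftharpoonup> x_n, acting successively on the empty array.\<close>
definition act_seq :: "nat list list \<Rightarrow> nat list list" where
  "act_seq xs = foldl act [] xs"

definition circled_array_N :: "nat list \<Rightarrow> nat list list \<Rightarrow> nat \<Rightarrow> nat list list" where
  "circled_array_N mu T N = act_seq (map (w_arr mu T) (rev [0..<Suc N]))"

end

theory Submission
  imports Defs
begin

text \<open>One box-ball step only ever lowers numbers: a circled k comes from a boxed k, and a
  boxed k from a boxed k or a circled k+1. Hence acting with a one-rowed array with entries
  in 1..m on a circled array with entries at most m+1 yields a circled array with entries in
  1..m. In a straight-shape tableau every entry of row i is at least i, so the array w_j only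
  contains numbers in 1..j. Acting successively with w_N, ..., w_0 therefore squeezes all
  circled numbers into 1..0, i.e. every row of the associated circled array is empty.\<close>

lemma set_cells_of:
  "set (cells_of C x) = (\<lambda>k. (k, True)) ` set C \<union> (\<lambda>k. (k, False)) ` set x"
  unfolding cells_of_def by (auto simp: set_sort)

lemma bb_new_cases:
  assumes "(k, b) \<in> set (bb_new cells)"
  obtains "b" "(k, False) \<in> set cells"
    | "\<not> b" "0 < k" "(k, False) \<in> set cells"
    | "\<not> b" "0 < k" "(Suc k, True) \<in> set cells"
proof -
  from assms obtain q where q: "q < length cells" and nz: "b \<or> k \<noteq> 0"
    and kb: "(k, b) = (case cells ! q of (k, b) \<Rightarrow>
       if b then (k - 1, False) else if q \<in> bb_step cells then (k, True) else (k, False))"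
    unfolding bb_new_def Let_def by auto
  obtain k0 b0 where c: "cells ! q = (k0, b0)" by (cases "cells ! q")
  have mem: "(k0, b0) \<in> set cells" using q c by (metis nth_mem)
  show ?thesis
  proof (cases b0)
    case True
    with kb c nz have "\<not> b" "0 < k" "k0 = Suc k" by auto
    with mem True show ?thesis using that(3) by simp
  next
    case False
    with kb c have "k = k0" by (auto split: if_splits)
    with mem False nz that(1,2) show ?thesis by (cases b) auto
  qed
qed

lemma set_fst_row_act: "set (fst (row_act C x)) \<subseteq> set x"
proof
  fix k assume "k \<in> set (fst (row_act C x))"
  then have "(k, True) \<in> set (bb_new (cells_of C x))"
    unfolding row_act_def Let_def by auto
  then show "k \<in> set x"
    by (rule bb_new_cases) (auto simp: set_cells_of)
qed

lemma set_snd_row_act: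
  assumes "k \<in> set (snd (row_act C x))"
  shows "0 < k \<and> (k \<in> set x \<or> Suc k \<in> set C)"
proof -
  from assms have "(k, False) \<in> set (bb_new (cells_of C x))"
    unfolding row_act_def Let_def by auto
  then show ?thesis
    by (rule bb_new_cases) (auto simp: set_cells_of)
qed

lemma act_rows_entries_bounded:
  assumes "set x \<subseteq> {1..m}" "set (concat C) \<subseteq> {..Suc m}"
  shows "set (concat (act_rows C x)) \<subseteq> {1..m}"
  using assms
proof (induction C arbitrary: x)
  case Nil
  then show ?case by simp
next
  case (Cons C1 Cs)
  obtain C' x' where ra: "row_act C1 x = (C', x')" by (cases "row_act C1 x")
  have "set C' \<subseteq> {1..m}" using set_fst_row_act[of C1 x] ra Cons.prems(1) by auto
  moreover have "set x' \<subseteq> {1..m}"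
  proof
    fix k assume "k \<in> set x'"
    then have "0 < k \<and> (k \<in> set x \<or> Suc k \<in> set C1)" using set_snd_row_act[of k C1 x] ra by simp
    then show "k \<in> {1..m}" using Cons.prems by fastforce
  qed
  then have "set (concat (act_rows Cs x')) \<subseteq> {1..m}"
    using Cons.IH Cons.prems(2) by simp
  ultimately show ?case using ra by simp
qed

lemma foldl_act_entries_empty:
  assumes "\<And>j. set (f j) \<subseteq> {1..j}" "set (concat C) \<subseteq> {..Suc N}"
  shows "set (concat (foldl act C (map f (rev [0..<Suc N])))) = {}"
  using assms(2)
proof (induction N arbitrary: C)
  case 0
  then have "set (concat (act C (f 0))) \<subseteq> {1..0}"
    unfolding act_def using act_rows_entries_bounded assms(1) by blast
  then show ?case by simp
next
  case (Suc N)
  have "set (concat (act C (f (Suc N)))) \<subseteq> {1..Suc N}"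
    unfolding act_def using act_rows_entries_bounded assms(1) Suc.prems by blast
  then have "set (concat (act C (f (Suc N)))) \<subseteq> {..Suc N}" by auto
  then show ?case using Suc.IH by simp
qed

lemma ssyt_entry_ge_row:
  assumes "ssyt T" "r < length T" "c < length (T ! r)"
  shows "Suc r \<le> T ! r ! c"
  using assms(2,3)
proof (induction r arbitrary: c)
  case 0
  then have "T ! 0 ! c \<in> set (T ! 0)" "T ! 0 \<in> set T" by simp_all
  then have "0 < T ! 0 ! c" using assms(1) unfolding ssyt_def skew_ssyt_def by blast
  then show ?case by simp
next
  case (Suc r)
  have sk: "skew_ssyt [] T" using assms(1) ssyt_def by simp
  then have "lam_at [] T (Suc r) \<le> lam_at [] T r" unfolding skew_ssyt_def by blast
  then have c: "c < length (T ! r)" using Suc.prems by (simp add: lam_at_def mu_at_def)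
  have "T ! r ! c < T ! Suc r ! c"
    using sk Suc.prems c unfolding skew_ssyt_def by (auto simp: lam_at_def mu_at_def)
  moreover have "Suc r \<le> T ! r ! c" using Suc.IH Suc.prems c by simp
  ultimately show ?case by simp
qed

lemma F_Suc: "F mu T (Suc i) j = F mu T i j + int (row_cnt mu T (Suc i) j)"
  unfolding F_def by (simp add: atLeastAtMostSuc_conv)

lemma W_eq_row_cnt_diff:
  "1 \<le> i \<Longrightarrow> W mu T i j = int (row_cnt mu T i j) - int (row_cnt mu T (Suc i) (Suc j))"
  unfolding W_def using F_Suc[of mu T "i - 1" j] by (cases i) (auto simp: F_Suc)

lemma set_w_arr_ssyt:
  assumes "ssyt T"
  shows "set (w_arr [] T j) \<subseteq> {1..j}"
proof
  fix k assume "k \<in> set (w_arr [] T j)"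
  then have i: "1 \<le> k" "k \<le> length T" "0 < W [] T k j"
    unfolding w_arr_def by (auto split: if_splits)
  then have "0 < row_cnt [] T k j" using W_eq_row_cnt_diff[of k "[]" T j] by auto
  then have "filter (\<lambda>x. x \<le> j) (T ! (k - 1)) \<noteq> []"
    using i by (auto simp: row_cnt_def mu_at_def split: if_splits)
  then obtain c where c: "c < length (T ! (k - 1))" "T ! (k - 1) ! c \<le> j"
    by (metis filter_False in_set_conv_nth)
  have "Suc (k - 1) \<le> T ! (k - 1) ! c" using ssyt_entry_ge_row[OF assms, of "k - 1" c] i c by simp
  then show "k \<in> {1..j}" using i c by simp
qed

theorem lemma3p8:
  fixes T :: "nat list list"
  assumes "ssyt T"
  shows "\<exists>N0. \<forall>N\<ge>N0. \<forall>r \<in> set (circled_array_N [] T N). r = []"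
proof (intro exI allI impI ballI)
  fix N r
  assume "r \<in> set (circled_array_N [] T N)"
  moreover have "set (concat (circled_array_N [] T N)) = {}"
    unfolding circled_array_N_def act_seq_def
    using foldl_act_entries_empty[OF set_w_arr_ssyt[OF assms], of "[]" N] by simp
  ultimately show "r = []" by (simp del: set_concat)
qed

end
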